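(* There exists $k_0>0$ such that for every $k\ge k_0$ the following hold. (i) For every $\varepsilon\in(0,1)$ there exists a positive entire radial solution $u$ of the initial value problem $$\Delta^3u=-\frac{1}{u^3},\quad u(0)=k,\quad \Delta u(0)=-\varepsilon,\quad \Delta^2u(0)=1,\quad u'(0)=(\Delta u)'(0)=(\Delta^2u)'(0)=0. \tag{P}$$ (ii) If $u$ is a positive entire radial solution of (P) for some $\varepsilon\in\mathbb{R}$, then necessarily $\varepsilon\le\sqrt{6k/5}$, and $$k-\frac{\varepsilon}{6}r^2\le u(r)\le k-\frac{\varepsilon}{6}r^2+\frac{r^4}{120}\quad\text{for all } r\in(0,\infty).$$
   Context: A radial function on $\mathbb{R}^3$ is written $u(r)$, $r=|x|$; for radial functions $\Delta w=w''+\frac{2}{r}w'$. A positive entire radial solution of (P) is a radial function $u$ defined and positive on all of $\mathbb{R}^3$ (i.e. $r\in[0,\infty)$), smooth, solving the ODE with the stated initial conditions at $r=0$. *)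

theory Defs
  imports "HOL-Analysis.Analysis"
begin

text \<open>A radial function on R^3 is represented by its profile u :: real => real.
  u(|x|) is smooth on R^3 iff the profile extends to an even C^infinity function on R;
  we represent profiles by such even smooth extensions.\<close>

definition smooth_fun :: "(real \<Rightarrow> real) \<Rightarrow> bool" where
  "smooth_fun f \<longleftrightarrow> (\<forall>n x. ((deriv ^^ n) f) differentiable (at x))"

definition even_fun :: "(real \<Rightarrow> real) \<Rightarrow> bool" where
  "even_fun f \<longleftrightarrow> (\<forall>r. f (- r) = f r)"

text \<open>Radial Laplacian in R^3: w'' + (2/r) w' for r \<noteq> 0, extended at r = 0 by its
  limit value 3 w''(0) (valid for smooth even profiles).\<close>

definition rlap :: "(real \<Rightarrow> real) \<Rightarrow> real \<Rightarrow> real" where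
  "rlap w = (\<lambda>r. if r = 0 then 3 * deriv (deriv w) 0
                 else deriv (deriv w) r + 2 / r * deriv w r)"

definition pos_entire_radial_sol :: "real \<Rightarrow> real \<Rightarrow> (real \<Rightarrow> real) \<Rightarrow> bool" where
  "pos_entire_radial_sol k \<epsilon> u \<longleftrightarrow>
     smooth_fun u \<and> even_fun u \<and> (\<forall>r\<ge>0. u r > 0) \<and>
     (\<forall>r\<ge>0. rlap (rlap (rlap u)) r = - 1 / (u r) ^ 3) \<and>
     u 0 = k \<and> rlap u 0 = - \<epsilon> \<and> rlap (rlap u) 0 = 1 \<and>
     deriv u 0 = 0 \<and> deriv (rlap u) 0 = 0 \<and> deriv (rlap (rlap u)) 0 = 0"

end

theory Submission
  imports Defs
begin

text \<open>
  Let P be the even quartic solving \<open>\<Delta>\<^sup>3P = 0\<close> with the initial data of (P), and let I be the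
  inverse of the radial Laplacian with zero data at the origin,
  \<open>I g(r) = \<integral>\<^sub>0\<^sup>r t (1 - t/r) g(t) dt\<close>. Problem (P) becomes the fixed-point equation
  \<open>u = P - I\<^sup>3(u\<^sup>-\<^sup>3)\<close>. The right-hand side is monotone in u, and if \<open>u \<ge> 1 + r\<^sup>2\<close> then
  \<open>0 \<le> I\<^sup>3(u\<^sup>-\<^sup>3) \<le> r\<^sup>4/240\<close>; so for large k it maps the order interval between
  \<open>Q = P - r\<^sup>4/240\<close> and P into itself, and iterating from Q gives an increasing sequence whose
  limit is a fixed point. The iterates are uniformly Lipschitz on compact sets, so the limit is
  continuous, and bootstrapping through I makes it smooth.

  Conversely, for a solution, \<open>\<Delta>\<^sup>3u = -u\<^sup>-\<^sup>3 < 0\<close> and the maximum principle for the radial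
  Laplacian (\<open>\<Delta>f \<le> 0\<close> and \<open>f'(0) = 0\<close> imply f nonincreasing) give \<open>\<Delta>\<^sup>2u \<le> 1\<close> and hence the
  upper bound; \<open>\<Delta>\<^sup>2u \<ge> 0\<close> because otherwise \<open>\<Delta>\<^sup>2u \<le> -\<delta>\<close> eventually, which drives \<open>\<Delta>u\<close> and
  then u to \<open>-\<infinity>\<close>. The lower bound follows, and the bound on \<open>\<epsilon>\<close> is the upper bound at
  \<open>r\<^sup>2 = 10\<epsilon>\<close>.
\<close>

section \<open>Continuously differentiable functions\<close>

fun cont_diff :: "nat \<Rightarrow> (real \<Rightarrow> real) \<Rightarrow> bool" where
  "cont_diff 0 f \<longleftrightarrow> continuous_on UNIV f"
| "cont_diff (Suc n) f \<longleftrightarrow> (\<forall>x. f differentiable (at x)) \<and> cont_diff n (deriv f)"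

lemma cont_diff_SucD: "cont_diff (Suc n) f \<Longrightarrow> cont_diff n f"
proof (induction n arbitrary: f)
  case 0
  then show ?case
    by (auto intro!: continuous_at_imp_continuous_on differentiable_imp_continuous_within)
qed auto

lemma cont_diff_mono: "m \<le> n \<Longrightarrow> cont_diff n f \<Longrightarrow> cont_diff m f"
proof (induction n rule: dec_induct)
  case base
  then show ?case by simp
next
  case (step n)
  then show ?case using cont_diff_SucD by blast
qed

lemma cont_diff_imp_continuous_on: "cont_diff n f \<Longrightarrow> continuous_on UNIV f"
  using cont_diff_mono[of 0 n f] by simp

lemma cont_diff_imp_DERIV: "cont_diff (Suc n) f \<Longrightarrow> DERIV f x :> deriv f x"
  by (simp add: DERIV_deriv_iff_real_differentiable)

lemma cont_diff_2_imp_DERIV: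
  assumes "cont_diff 2 f"
  shows "DERIV f x :> deriv f x" "DERIV (deriv f) x :> deriv (deriv f) x"
  using assms by (simp_all add: numeral_2_eq_2 DERIV_deriv_iff_real_differentiable)

lemma cont_diff_const: "cont_diff n (\<lambda>_. c)"
proof (induction n arbitrary: c)
  case (Suc n)
  have "deriv (\<lambda>_. c) = (\<lambda>_. 0)"
    by (intro ext DERIV_imp_deriv) auto
  then show ?case using Suc by simp
qed simp

lemma cont_diff_ident: "cont_diff n (\<lambda>x. x)"
proof (cases n)
  case (Suc m)
  have "deriv (\<lambda>x. x) = (\<lambda>_. 1)"
    by (intro ext DERIV_imp_deriv) auto
  then show ?thesis using Suc cont_diff_const by simp
qed simp

lemma cont_diff_add: "cont_diff n f \<Longrightarrow> cont_diff n g \<Longrightarrow> cont_diff n (\<lambda>x. f x + g x)"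
proof (induction n arbitrary: f g)
  case (Suc n)
  have "deriv (\<lambda>x. f x + g x) = (\<lambda>x. deriv f x + deriv g x)"
    using Suc.prems by (intro ext DERIV_imp_deriv derivative_intros cont_diff_imp_DERIV)
  then show ?case using Suc by auto
qed (auto intro!: continuous_intros)

lemma cont_diff_mult: "cont_diff n f \<Longrightarrow> cont_diff n g \<Longrightarrow> cont_diff n (\<lambda>x. f x * g x)"
proof (induction n arbitrary: f g)
  case (Suc n)
  have df: "\<And>x. DERIV f x :> deriv f x" "\<And>x. DERIV g x :> deriv g x"
    using Suc.prems by (auto intro: cont_diff_imp_DERIV)
  have "deriv (\<lambda>x. f x * g x) = (\<lambda>x. deriv f x * g x + f x * deriv g x)"
    by (intro ext DERIV_imp_deriv) (auto intro!: derivative_eq_intros df)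
  moreover have "cont_diff n (\<lambda>x. deriv f x * g x + f x * deriv g x)"
    using Suc cont_diff_SucD[OF Suc.prems(1)] cont_diff_SucD[OF Suc.prems(2)]
    by (intro cont_diff_add Suc.IH) auto
  ultimately show ?case using Suc by auto
qed (auto intro!: continuous_intros)

lemma cont_diff_minus: "cont_diff n f \<Longrightarrow> cont_diff n (\<lambda>x. - f x)"
  using cont_diff_mult[OF cont_diff_const[of n "-1"], of f] by simp

lemma cont_diff_diff: "cont_diff n f \<Longrightarrow> cont_diff n g \<Longrightarrow> cont_diff n (\<lambda>x. f x - g x)"
  using cont_diff_add[of n f "\<lambda>x. - g x"] cont_diff_minus[of n g] by simp

lemma cont_diff_power: "cont_diff n f \<Longrightarrow> cont_diff n (\<lambda>x. f x ^ m)"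
  by (induction m) (auto intro: cont_diff_mult cont_diff_const)

lemma cont_diff_inverse:
  "cont_diff n f \<Longrightarrow> (\<And>x. f x \<noteq> 0) \<Longrightarrow> cont_diff n (\<lambda>x. inverse (f x))"
proof (induction n arbitrary: f)
  case (Suc n)
  let ?f' = "\<lambda>x. - (deriv f x * (inverse (f x) * inverse (f x)))"
  have D: "DERIV (\<lambda>x. inverse (f x)) x :> ?f' x" for x
    using Suc.prems
    by (auto intro!: derivative_eq_intros cont_diff_imp_DERIV simp: power2_eq_square)
  then have "deriv (\<lambda>x. inverse (f x)) = ?f'"
    by (intro ext DERIV_imp_deriv)
  moreover have "cont_diff n ?f'"
    using Suc cont_diff_SucD[OF Suc.prems(1)] by (intro cont_diff_minus cont_diff_mult Suc.IH) auto
  ultimately show ?case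
    using D real_differentiable_def by auto
qed (auto intro!: continuous_intros)

lemma cont_diff_funpow_deriv: "cont_diff (j + n) f \<Longrightarrow> cont_diff n ((deriv ^^ j) f)"
proof (induction j arbitrary: f)
  case (Suc j)
  then have "cont_diff n ((deriv ^^ j) (deriv f))" by simp
  then show ?case by (simp add: funpow_Suc_right del: funpow.simps)
qed simp

lemma smooth_fun_iff_cont_diff: "smooth_fun f \<longleftrightarrow> (\<forall>n. cont_diff n f)"
proof
  assume smooth: "smooth_fun f"
  have "cont_diff n ((deriv ^^ j) f)" for n j
  proof (induction n arbitrary: j)
    case 0
    then show ?case using smooth unfolding smooth_fun_def
      by (auto intro!: continuous_at_imp_continuous_on differentiable_imp_continuous_within)
  next
    case (Suc n)
    then show ?case using smooth Suc.IH[of "Suc j"] unfolding smooth_fun_def by simp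
  qed
  from this[of _ 0] show "\<forall>n. cont_diff n f" by simp
next
  assume "\<forall>n. cont_diff n f"
  then have "cont_diff 1 ((deriv ^^ n) f)" for n
    using cont_diff_funpow_deriv[of n 1 f] by simp
  then show "smooth_fun f" unfolding smooth_fun_def by simp
qed

lemma even_fun_imp_deriv_0:
  assumes even: "even_fun f" and diff: "f differentiable at 0"
  shows "deriv f 0 = 0"
proof -
  have D: "DERIV f 0 :> deriv f 0"
    using diff DERIV_deriv_iff_real_differentiable by blast
  have "(\<lambda>x. f (- x)) = f" using even unfolding even_fun_def by auto
  then have "DERIV f 0 :> - deriv f 0"
    using DERIV_mirror[where f=f and x=0 and y="deriv f 0"] D by simp
  with D have "deriv f 0 = - deriv f 0" using DERIV_unique by blast
  then show ?thesis by simp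
qed

definition even_quartic :: "real \<Rightarrow> real \<Rightarrow> real \<Rightarrow> real \<Rightarrow> real" where
  "even_quartic a b c r = a + b * r^2 + c * r^4"

lemma cont_diff_even_quartic: "cont_diff n (even_quartic a b c)"
  unfolding even_quartic_def[abs_def]
  by (intro cont_diff_add cont_diff_mult cont_diff_const cont_diff_power cont_diff_ident)

lemma even_fun_even_quartic: "even_fun (even_quartic a b c)"
  unfolding even_fun_def even_quartic_def by simp

lemma DERIV_even_quartic: "DERIV (even_quartic a b c) r :> 2 * b * r + 4 * c * r^3"
  unfolding even_quartic_def[abs_def] by (auto intro!: derivative_eq_intros simp: eval_nat_numeral)

lemma deriv_even_quartic_0: "deriv (even_quartic a b c) 0 = 0"
  using DERIV_even_quartic[of a b c 0] DERIV_imp_deriv by fastforce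

lemma rlap_even_quartic: "rlap (even_quartic a b c) = even_quartic (6 * b) (20 * c) 0"
proof -
  have d1: "deriv (even_quartic a b c) = (\<lambda>r. 2 * b * r + 4 * c * r^3)"
    by (intro ext DERIV_imp_deriv DERIV_even_quartic)
  have d2: "deriv (\<lambda>r. 2 * b * r + 4 * c * r^3) = (\<lambda>r. 2 * b + 12 * c * r^2)"
    by (intro ext DERIV_imp_deriv) (auto intro!: derivative_eq_intros simp: eval_nat_numeral)
  have "2 / r * (2 * b * r + 4 * c * r^3) = 4 * b + 8 * c * r^2" if "r \<noteq> 0" for r
    using that by (simp add: field_simps power2_eq_square power3_eq_cube)
  then show ?thesis
    by (auto simp: rlap_def d1 d2 even_quartic_def)
qed

section \<open>The inverse radial Laplacian\<close>

lemma DERIV_imp_has_integral: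
  fixes F f :: "real \<Rightarrow> real"
  assumes "a \<le> b" "\<And>s. s \<in> {a..b} \<Longrightarrow> DERIV F s :> f s"
  shows "(f has_integral (F b - F a)) {a..b}"
  using assms
  by (intro fundamental_theorem_of_calculus)
     (auto simp: has_real_derivative_iff_has_vector_derivative[symmetric]
           intro: has_field_derivative_at_within)

lemma integral_eq_antiderivative:
  fixes F f :: "real \<Rightarrow> real"
  assumes "a \<le> b" "\<And>s. DERIV F s :> f s"
  shows "integral {a..b} f = F b - F a"
  using DERIV_imp_has_integral assms by (blast intro: integral_unique)

lemma integral_dilate_0_1:
  fixes h :: "real \<Rightarrow> real"
  assumes r: "r > 0"
  shows "integral {0..1} (\<lambda>s. h (r * s)) = integral {0..r} h / r"
proof -
  have "(\<lambda>x. x / r) ` {0..r} = {0..1}"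
  proof
    show "{0..1} \<subseteq> (\<lambda>x. x / r) ` {0..r}"
    proof
      fix s :: real assume "s \<in> {0..1}"
      then have "r * s \<in> {0..r}" "s = (r * s) / r" using r by (auto simp: mult_le_cancel_left1)
      then show "s \<in> (\<lambda>x. x / r) ` {0..r}" by blast
    qed
  qed (use r in auto)
  then show ?thesis
    using integral_stretch_real[of r 0 r h] r by simp
qed

lemma DERIV_integral_0:
  fixes h :: "real \<Rightarrow> real"
  assumes r: "r > 0" and h: "continuous_on UNIV h"
  shows "DERIV (\<lambda>x. integral {0..x} h) r :> h r"
proof -
  have "((\<lambda>x. integral {0..x} h) has_real_derivative h r) (at r within {0..r+1})"
    by (rule integral_has_real_derivative) (use r continuous_on_subset[OF h] in auto)
  moreover have "r \<in> interior {0..r+1}" using r by simp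
  ultimately show ?thesis using at_within_interior by metis
qed

text \<open>Integrals over [0, r] are rescaled to [0, 1], so that r can be differentiated under the
  integral sign on all of \<open>\<real>\<close>, including \<open>r \<le> 0\<close>.\<close>

definition dil_avg :: "(real \<Rightarrow> real) \<Rightarrow> (real \<Rightarrow> real) \<Rightarrow> real \<Rightarrow> real" where
  "dil_avg w g r = integral {0..1} (\<lambda>s. w s * g (r * s))"

lemma integrable_dilate:
  fixes w g :: "real \<Rightarrow> real"
  assumes "continuous_on UNIV w" "continuous_on UNIV g"
  shows "(\<lambda>s. w s * g (r * s)) integrable_on {a..b}"
  by (intro integrable_continuous_real continuous_intros continuous_on_compose2[OF assms(1)]
      continuous_on_compose2[OF assms(2)]) auto

lemma continuous_on_dil_avg:
  assumes "continuous_on UNIV w" "continuous_on UNIV g"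
  shows "continuous_on UNIV (dil_avg w g)"
proof -
  have "continuous_on (UNIV \<times> cbox 0 1) (\<lambda>(x, t). w t * g (x * t))"
    unfolding split_beta
    by (intro continuous_intros continuous_on_compose2[OF assms(1)]
        continuous_on_compose2[OF assms(2)]) auto
  from integral_continuous_on_param[OF this] show ?thesis
    unfolding dil_avg_def[abs_def] by simp
qed

lemma DERIV_dil_avg:
  assumes w: "continuous_on UNIV w" and dg: "\<And>x. DERIV g x :> g' x"
    and g': "continuous_on UNIV g'"
  shows "DERIV (dil_avg w g) r :> dil_avg (\<lambda>s. w s * s) g' r"
proof -
  have g: "continuous_on UNIV g"
    using dg by (meson DERIV_isCont continuous_at_imp_continuous_on)
  have "((\<lambda>x. integral (cbox 0 1) (\<lambda>t. w t * g (x * t))) has_field_derivative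
          integral (cbox 0 1) (\<lambda>t. w t * (g' (r * t) * t))) (at r within UNIV)"
  proof (rule leibniz_rule_field_derivative)
    show "((\<lambda>x. w t * g (x * t)) has_field_derivative w t * (g' (x * t) * t)) (at x within UNIV)"
      for x t
      by (auto intro!: derivative_eq_intros DERIV_chain2[OF dg])
    show "(\<lambda>t. w t * g (x * t)) integrable_on cbox 0 1" for x
      by (intro integrable_continuous continuous_intros continuous_on_compose2[OF w]
          continuous_on_compose2[OF g]) auto
    show "continuous_on (UNIV \<times> cbox 0 1) (\<lambda>(x, t). w t * (g' (x * t) * t))"
      unfolding split_beta
      by (intro continuous_intros continuous_on_compose2[OF w] continuous_on_compose2[OF g']) auto
  qed auto
  then show ?thesis
    unfolding dil_avg_def[abs_def] by (simp add: mult_ac)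
qed

lemma cont_diff_dil_avg: "continuous_on UNIV w \<Longrightarrow> cont_diff n g \<Longrightarrow> cont_diff n (dil_avg w g)"
proof (induction n arbitrary: w g)
  case 0
  then show ?case using continuous_on_dil_avg by simp
next
  case (Suc n)
  have "\<And>x. DERIV g x :> deriv g x" "continuous_on UNIV (deriv g)"
    using Suc.prems cont_diff_imp_DERIV cont_diff_imp_continuous_on by auto
  then have D: "\<And>r. DERIV (dil_avg w g) r :> dil_avg (\<lambda>s. w s * s) (deriv g) r"
    using DERIV_dil_avg Suc.prems(1) by blast
  then have "deriv (dil_avg w g) = dil_avg (\<lambda>s. w s * s) (deriv g)"
    by (intro ext DERIV_imp_deriv)
  moreover have "cont_diff n (dil_avg (\<lambda>s. w s * s) (deriv g))"
    using Suc by (intro Suc.IH) (auto intro!: continuous_intros)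
  ultimately show ?case
    using D real_differentiable_def by auto
qed

lemma dil_avg_minus: "even_fun g \<Longrightarrow> dil_avg w g (- r) = dil_avg w g r"
  unfolding dil_avg_def even_fun_def by (metis minus_mult_left)

lemma dil_avg_0: "dil_avg w g 0 = integral {0..1} w * g 0"
  unfolding dil_avg_def by simp

lemma dil_avg_mono:
  assumes "continuous_on UNIV w1" "continuous_on UNIV w2"
    and "continuous_on UNIV g1" "continuous_on UNIV g2"
    and "\<And>s. s \<in> {0..1} \<Longrightarrow> w1 s * g1 (r * s) \<le> w2 s * g2 (r * s)"
  shows "dil_avg w1 g1 r \<le> dil_avg w2 g2 r"
  unfolding dil_avg_def using assms by (intro integral_le integrable_dilate) auto

text \<open>\<open>inv_rlap g r = \<integral>\<^sub>0\<^sup>r t (1 - t/r) g(t) dt\<close> is the operator I of the header.\<close>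

definition inv_rlap :: "(real \<Rightarrow> real) \<Rightarrow> real \<Rightarrow> real" where
  "inv_rlap g r = r^2 * dil_avg (\<lambda>s. s * (1 - s)) g r"

lemma even_fun_inv_rlap:
  assumes "even_fun g"
  shows "even_fun (inv_rlap g)"
  using dil_avg_minus[OF assms] unfolding inv_rlap_def even_fun_def by simp

lemma inv_rlap_0 [simp]: "inv_rlap g 0 = 0"
  unfolding inv_rlap_def by simp

lemma continuous_on_inv_rlap: "continuous_on UNIV g \<Longrightarrow> continuous_on UNIV (inv_rlap g)"
  unfolding inv_rlap_def[abs_def]
  by (intro continuous_intros continuous_on_dil_avg) auto

lemma inv_rlap_eq_integrals:
  assumes r: "r > 0" and g: "continuous_on UNIV g"
  shows "inv_rlap g r = integral {0..r} (\<lambda>t. t * g t) - integral {0..r} (\<lambda>t. t^2 * g t) / r"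
proof -
  let ?h = "\<lambda>t. (1/r) * (t * g t) - (1/r^2) * (t^2 * g t)"
  have "dil_avg (\<lambda>s. s * (1 - s)) g r = integral {0..1} (\<lambda>s. ?h (r * s))"
    unfolding dil_avg_def using r by (intro integral_cong) (simp add: field_simps power2_eq_square)
  also have "\<dots> = integral {0..r} ?h / r" by (rule integral_dilate_0_1[OF r])
  also have "integral {0..r} ?h
      = (1/r) * integral {0..r} (\<lambda>t. t * g t) - (1/r^2) * integral {0..r} (\<lambda>t. t^2 * g t)"
    using r by (subst integral_diff)
       (auto intro!: integrable_continuous_real continuous_intros continuous_on_subset[OF g])
  finally show ?thesis unfolding inv_rlap_def using r by (simp add: field_simps power2_eq_square)
qed

lemma dil_avg_square_eq_integral:
  assumes r: "r > 0"
  shows "dil_avg (\<lambda>s. s^2) g r = integral {0..r} (\<lambda>t. t^2 * g t) / r^3"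
proof -
  have "dil_avg (\<lambda>s. s^2) g r = integral {0..1} (\<lambda>s. (\<lambda>t. (1/r^2) * (t^2 * g t)) (r * s))"
    unfolding dil_avg_def using r by (intro integral_cong) (simp add: field_simps power2_eq_square)
  also have "\<dots> = integral {0..r} (\<lambda>t. (1/r^2) * (t^2 * g t)) / r"
    by (rule integral_dilate_0_1[OF r])
  finally show ?thesis by (simp add: field_simps power2_eq_square power3_eq_cube)
qed

lemma DERIV_inv_rlap_pos:
  assumes r: "r > 0" and g: "continuous_on UNIV g"
  shows "DERIV (inv_rlap g) r :> r * dil_avg (\<lambda>s. s^2) g r"
proof -
  let ?G1 = "\<lambda>x. integral {0..x} (\<lambda>t. t * g t)"
  let ?G2 = "\<lambda>x. integral {0..x} (\<lambda>t. t^2 * g t)"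
  have d1: "DERIV ?G1 r :> r * g r" and d2: "DERIV ?G2 r :> r^2 * g r"
    by (rule DERIV_integral_0[OF r], auto intro!: continuous_intros g)+
  have "DERIV (\<lambda>x. ?G1 x - ?G2 x / x) r :> r * g r - (r^2 * g r * r - ?G2 r * 1) / (r * r)"
    using r by (auto intro!: derivative_eq_intros d1 d2)
  moreover have "r * g r - (r^2 * g r * r - ?G2 r * 1) / (r * r) = r * dil_avg (\<lambda>s. s^2) g r"
    using r dil_avg_square_eq_integral[OF r, of g]
    by (simp add: field_simps power2_eq_square power3_eq_cube)
  ultimately have "DERIV (\<lambda>x. ?G1 x - ?G2 x / x) r :> r * dil_avg (\<lambda>s. s^2) g r"
    by simp
  then show ?thesis
    by (rule has_field_derivative_transform_within_open[where S="{0<..}"])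
       (use r inv_rlap_eq_integrals[OF _ g] in auto)
qed

lemma DERIV_inv_rlap:
  assumes g: "continuous_on UNIV g" and even: "even_fun g"
  shows "DERIV (inv_rlap g) r :> r * dil_avg (\<lambda>s. s^2) g r"
proof -
  consider "r > 0" | "r = 0" | "- r > 0" by linarith
  then show ?thesis
  proof cases
    case 1
    then show ?thesis using DERIV_inv_rlap_pos[OF _ g] by blast
  next
    case 2
    have "DERIV (inv_rlap g) 0 :> 0"
      unfolding CARAT_DERIV
    proof (intro exI conjI allI)
      show "inv_rlap g z - inv_rlap g 0 = z * dil_avg (\<lambda>s. s * (1 - s)) g z * (z - 0)" for z
        unfolding inv_rlap_def by (simp add: power2_eq_square)
      have "continuous_on UNIV (\<lambda>z. z * dil_avg (\<lambda>s. s * (1 - s)) g z)"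
        by (auto intro!: continuous_intros continuous_on_dil_avg g)
      then show "isCont (\<lambda>z. z * dil_avg (\<lambda>s. s * (1 - s)) g z) 0"
        by (simp add: continuous_on_eq_continuous_at)
    qed simp
    with 2 show ?thesis by simp
  next
    case 3
    have "(\<lambda>x. inv_rlap g (- x)) = inv_rlap g"
      using even_fun_inv_rlap[OF even] unfolding even_fun_def by auto
    then show ?thesis
      using DERIV_mirror[where f="inv_rlap g" and x=r] DERIV_inv_rlap_pos[OF 3 g]
        dil_avg_minus[OF even]
      by simp
  qed
qed

lemma cont_diff_inv_rlap: "even_fun g \<Longrightarrow> cont_diff n g \<Longrightarrow> cont_diff (Suc n) (inv_rlap g)"
proof -
  assume even: "even_fun g" and g: "cont_diff n g"
  have D: "DERIV (inv_rlap g) r :> r * dil_avg (\<lambda>s. s^2) g r" for r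
    using DERIV_inv_rlap[OF cont_diff_imp_continuous_on[OF g] even] .
  then have "deriv (inv_rlap g) = (\<lambda>r. r * dil_avg (\<lambda>s. s^2) g r)"
    by (intro ext DERIV_imp_deriv)
  moreover have "cont_diff n (\<lambda>r. r * dil_avg (\<lambda>s. s^2) g r)"
    by (intro cont_diff_mult cont_diff_ident cont_diff_dil_avg g) (auto intro!: continuous_intros)
  ultimately show ?thesis using D real_differentiable_def by auto
qed

text \<open>Integrating \<open>(s\<^sup>3 g(rs))' = 3s\<^sup>2g(rs) + r s\<^sup>3g'(rs)\<close> over [0, 1].\<close>

lemma dil_avg_square_identity:
  assumes g: "cont_diff 1 g"
  shows "3 * dil_avg (\<lambda>s. s^2) g r + r * dil_avg (\<lambda>s. s^2 * s) (deriv g) r = g r"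
proof -
  have cg: "continuous_on UNIV g" using cont_diff_imp_continuous_on[OF g] .
  have dg: "\<And>x. DERIV g x :> deriv g x" using g cont_diff_imp_DERIV[of 0 g] by simp
  have cdg: "continuous_on UNIV (deriv g)" using g by simp
  let ?F = "\<lambda>s. 3 * s^2 * g (r * s) + s^3 * (deriv g (r * s) * r)"
  have i1: "(\<lambda>s. 3 * s^2 * g (r * s)) integrable_on {0..1}"
    by (intro integrable_dilate cg) (auto intro!: continuous_intros)
  have i2: "(\<lambda>s. s^3 * r * deriv g (r * s)) integrable_on {0..1}"
    by (intro integrable_dilate cdg) (auto intro!: continuous_intros)
  have "integral {0..1} ?F = (\<lambda>s. s^3 * g (r * s)) 1 - (\<lambda>s. s^3 * g (r * s)) 0"
    by (rule integral_eq_antiderivative)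
       (auto intro!: derivative_eq_intros DERIV_chain2[OF dg] simp: power2_eq_square power3_eq_cube)
  then have "g r = integral {0..1} ?F" by simp
  also have "\<dots> = integral {0..1} (\<lambda>s. 3 * (s^2 * g (r * s)))
      + integral {0..1} (\<lambda>s. r * (s^2 * s * deriv g (r * s)))"
    using integral_add[OF i1 i2] by (simp add: mult_ac power3_eq_cube power2_eq_square)
  finally show ?thesis
    unfolding dil_avg_def by simp
qed

lemma rlap_inv_rlap:
  assumes even: "even_fun g" and g: "cont_diff 1 g"
  shows "rlap (inv_rlap g) r = g r"
proof -
  let ?H = "dil_avg (\<lambda>s. s^2) g"
  let ?H' = "dil_avg (\<lambda>s. s^2 * s) (deriv g)"
  have "DERIV ?H x :> ?H' x" for x
    using g by (intro DERIV_dil_avg cont_diff_imp_DERIV[of 0]) (auto intro!: continuous_intros)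
  then have "deriv (\<lambda>x. x * ?H x) x = ?H x + x * ?H' x" for x
    by (intro DERIV_imp_deriv) (auto intro!: derivative_eq_intros)
  moreover have "deriv (inv_rlap g) = (\<lambda>x. x * ?H x)"
    using g by (intro ext DERIV_imp_deriv DERIV_inv_rlap cont_diff_imp_continuous_on even)
  ultimately show ?thesis
    using dil_avg_square_identity[OF g, of r] by (auto simp: rlap_def field_simps)
qed

lemma inv_rlap_mono:
  assumes "continuous_on UNIV g1" "continuous_on UNIV g2" "\<And>t. g1 t \<le> g2 t"
  shows "inv_rlap g1 r \<le> inv_rlap g2 r"
proof -
  have "dil_avg (\<lambda>s. s * (1 - s)) g1 r \<le> dil_avg (\<lambda>s. s * (1 - s)) g2 r"
    using assms by (intro dil_avg_mono mult_left_mono) (auto intro!: continuous_intros)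
  then show ?thesis unfolding inv_rlap_def by (intro mult_left_mono) auto
qed

lemma inv_rlap_const: "inv_rlap (\<lambda>_. c) r = c * r^2 / 6"
proof -
  have "integral {0..1} (\<lambda>s. s * (1 - s))
      = (\<lambda>s. s^2/2 - s^3/3) 1 - (\<lambda>s. s^2/2 - s^3/3) (0 :: real)"
    by (rule integral_eq_antiderivative)
       (auto intro!: derivative_eq_intros simp: algebra_simps power2_eq_square)
  then show ?thesis
    unfolding inv_rlap_def dil_avg_def by simp
qed

lemma inv_rlap_square: "inv_rlap (\<lambda>t. c * t^2) r = c * r^4 / 20"
proof -
  have "integral {0..1} (\<lambda>s. s * (1 - s) * s^2)
      = (\<lambda>s. s^4/4 - s^5/5) 1 - (\<lambda>s. s^4/4 - s^5/5) (0 :: real)"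
    by (rule integral_eq_antiderivative)
       (auto intro!: derivative_eq_intros simp: algebra_simps eval_nat_numeral)
  moreover have "dil_avg (\<lambda>s. s * (1 - s)) (\<lambda>t. c * t^2) r
      = integral {0..1} (\<lambda>s. (c * r^2) * (s * (1 - s) * s^2))"
    unfolding dil_avg_def by (intro integral_cong) (simp add: power_mult_distrib)
  ultimately show ?thesis unfolding inv_rlap_def by (simp add: eval_nat_numeral)
qed

lemma inv_rlap_nonneg:
  assumes "continuous_on UNIV g" "\<And>t. 0 \<le> g t"
  shows "0 \<le> inv_rlap g r"
  using inv_rlap_mono[of "\<lambda>_. 0" g r] assms inv_rlap_const[of 0 r] by simp

lemma inv_rlap_decay_le: "inv_rlap (\<lambda>t. inverse ((1 + t^2)^2)) r \<le> 1/2"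
proof -
  let ?psi = "\<lambda>t::real. inverse ((1 + t^2)^2)"
  have psi: "continuous_on UNIV ?psi" "\<And>t. 0 < ?psi t"
    by (auto intro!: continuous_intros simp: add_nonneg_eq_0_iff)
  have "s * (1 - s) * ?psi (r * s) \<le> s * ?psi (r * s)" if "s \<in> {0..1}" for s
    using that psi(2)[of "r * s"] by (intro mult_right_mono) (auto simp: algebra_simps)
  then have "dil_avg (\<lambda>s. s * (1 - s)) ?psi r \<le> dil_avg (\<lambda>s. s) ?psi r"
    using psi(1) by (intro dil_avg_mono) (auto intro!: continuous_intros)
  then have "inv_rlap ?psi r \<le> r^2 * dil_avg (\<lambda>s. s) ?psi r"
    unfolding inv_rlap_def by (intro mult_left_mono) auto
  also have "\<dots> = integral {0..1} (\<lambda>s. r^2 * s * ?psi (r * s))"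
    unfolding dil_avg_def by (simp add: mult.assoc)
  also have "\<dots> = (\<lambda>s. - (inverse (1 + r^2 * s^2) / 2)) 1 - (\<lambda>s. - (inverse (1 + r^2 * s^2) / 2)) 0"
  proof (rule integral_eq_antiderivative)
    fix s :: real
    have "0 < 1 + r^2 * s^2" by (simp add: add_pos_nonneg)
    then show "DERIV (\<lambda>s. - (inverse (1 + r^2 * s^2) / 2)) s :> r^2 * s * ?psi (r * s)"
      by (auto intro!: derivative_eq_intros simp: power_mult_distrib)
         (simp add: field_simps power_mult_distrib power2_eq_square)
  qed simp
  also have "\<dots> \<le> 1/2" by (simp add: add_pos_nonneg)
  finally show ?thesis .
qed

lemma tendsto_inv_rlap:
  assumes cont: "\<And>n. continuous_on UNIV (h n)" and bound: "\<And>n t. \<bar>h n t\<bar> \<le> 1 + t^2"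
    and lim: "\<And>t. (\<lambda>n. h n t) \<longlonglongrightarrow> h_lim t"
  shows "(\<lambda>n. inv_rlap (h n) r) \<longlonglongrightarrow> inv_rlap h_lim r"
proof -
  have "(\<lambda>n. integral {0..1} (\<lambda>s. s * (1 - s) * h n (r * s)))
      \<longlonglongrightarrow> integral {0..1} (\<lambda>s. s * (1 - s) * h_lim (r * s))"
  proof (rule dominated_convergence(2)[where h="\<lambda>s. s * (1 - s) * (1 + (r * s)^2)"])
    show "(\<lambda>s. s * (1 - s) * h n (r * s)) integrable_on {0..1}" for n
      by (intro integrable_dilate cont) (auto intro!: continuous_intros)
    show "(\<lambda>s. s * (1 - s) * (1 + (r * s)^2)) integrable_on {0..1::real}"
      by (intro integrable_continuous_real continuous_intros)
    show "norm (s * (1 - s) * h n (r * s)) \<le> s * (1 - s) * (1 + (r * s)^2)"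
      if "s \<in> {0..1}" for n s
      using that bound by (auto simp: abs_mult intro!: mult_left_mono)
    show "(\<lambda>n. s * (1 - s) * h n (r * s)) \<longlonglongrightarrow> s * (1 - s) * h_lim (r * s)" for s
      by (intro tendsto_mult_left lim)
  qed
  then show ?thesis unfolding inv_rlap_def dil_avg_def by (intro tendsto_mult_left)
qed

lemma rlap_eq_dil_avg:
  assumes f: "cont_diff 2 f" and f0: "deriv f 0 = 0"
  shows "rlap f = (\<lambda>r. deriv (deriv f) r + 2 * dil_avg (\<lambda>_. 1) (deriv (deriv f)) r)"
proof
  fix r :: real
  note D = cont_diff_2_imp_DERIV[OF f]
  show "rlap f r = deriv (deriv f) r + 2 * dil_avg (\<lambda>_. 1) (deriv (deriv f)) r"
  proof (cases "r = 0")
    case True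
    then show ?thesis unfolding rlap_def using dil_avg_0[of "\<lambda>_. 1"] by simp
  next
    case False
    have "((\<lambda>s. deriv (deriv f) (r * s) * r) has_integral
            ((\<lambda>s. deriv f (r * s)) 1 - (\<lambda>s. deriv f (r * s)) 0)) {0..1}"
      by (rule DERIV_imp_has_integral) (auto intro!: derivative_eq_intros DERIV_chain2[OF D(2)])
    from integral_unique[OF this]
    have "integral {0..1} (\<lambda>s. deriv (deriv f) (r * s) * r) = deriv f r"
      using f0 by simp
    moreover have "integral {0..1} (\<lambda>s. deriv (deriv f) (r * s) * r)
        = r * dil_avg (\<lambda>_. 1) (deriv (deriv f)) r"
      unfolding dil_avg_def by (simp add: mult.commute)
    ultimately have "deriv f r = r * dil_avg (\<lambda>_. 1) (deriv (deriv f)) r" by simp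
    then show ?thesis unfolding rlap_def using False by simp
  qed
qed

lemma cont_diff_rlap:
  assumes f: "\<And>n. cont_diff n f" and f0: "deriv f 0 = 0"
  shows "cont_diff n (rlap f)"
proof -
  have "cont_diff n (deriv (deriv f))" using f[of "Suc (Suc n)"] by simp
  then have "cont_diff n (\<lambda>r. deriv (deriv f) r + 2 * dil_avg (\<lambda>_. 1) (deriv (deriv f)) r)"
    by (intro cont_diff_add cont_diff_mult cont_diff_const cont_diff_dil_avg) auto
  then show ?thesis using rlap_eq_dil_avg[OF f f0] by simp
qed

lemma rlap_diff:
  assumes f: "cont_diff 2 f" and g: "cont_diff 2 g"
  shows "rlap (\<lambda>r. f r - g r) = (\<lambda>r. rlap f r - rlap g r)"
proof -
  note Df = cont_diff_2_imp_DERIV[OF f] and Dg = cont_diff_2_imp_DERIV[OF g]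
  have d1: "deriv (\<lambda>r. f r - g r) = (\<lambda>x. deriv f x - deriv g x)"
    by (intro ext DERIV_imp_deriv) (auto intro!: derivative_eq_intros Df Dg)
  have d2: "deriv (\<lambda>x. deriv f x - deriv g x) = (\<lambda>x. deriv (deriv f) x - deriv (deriv g) x)"
    by (intro ext DERIV_imp_deriv) (auto intro!: derivative_eq_intros Df Dg)
  show ?thesis
    unfolding rlap_def d1 d2 by (auto simp: right_diff_distrib)
qed

lemma rlap_even_quartic_minus_inv_rlap:
  assumes "even_fun h" "cont_diff 1 h"
  shows "rlap (\<lambda>r. even_quartic a b c r - inv_rlap h r) = (\<lambda>r. even_quartic (6 * b) (20 * c) 0 r - h r)"
  using rlap_diff[OF cont_diff_even_quartic, of "inv_rlap h"] cont_diff_inv_rlap[OF assms]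
  by (simp add: numeral_2_eq_2 rlap_even_quartic rlap_inv_rlap[OF assms])

lemma inv_rlap_iterates_bounds:
  assumes g: "continuous_on UNIV g" and bound: "\<And>t. 0 \<le> g t \<and> g t \<le> inverse ((1 + t^2)^2)"
  shows "0 \<le> inv_rlap g r \<and> inv_rlap g r \<le> 1/2"
    and "0 \<le> inv_rlap (inv_rlap g) r \<and> inv_rlap (inv_rlap g) r \<le> r^2 / 12"
    and "0 \<le> inv_rlap (inv_rlap (inv_rlap g)) r \<and> inv_rlap (inv_rlap (inv_rlap g)) r \<le> r^4 / 240"
proof -
  have decay: "continuous_on UNIV (\<lambda>t::real. inverse ((1 + t^2)^2))"
    by (intro continuous_intros) (simp add: add_nonneg_eq_0_iff)
  have b1: "0 \<le> inv_rlap g t \<and> inv_rlap g t \<le> 1/2" for t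
    using inv_rlap_nonneg[OF g] bound inv_rlap_mono[OF g decay, of t] inv_rlap_decay_le[of t]
    by force
  then show "0 \<le> inv_rlap g r \<and> inv_rlap g r \<le> 1/2" .
  have c1: "continuous_on UNIV (inv_rlap g)" by (rule continuous_on_inv_rlap[OF g])
  have b2: "0 \<le> inv_rlap (inv_rlap g) t \<and> inv_rlap (inv_rlap g) t \<le> t^2 / 12" for t
    using inv_rlap_nonneg[OF c1] b1 inv_rlap_mono[OF c1 continuous_on_const, of "1/2" t]
      inv_rlap_const[of "1/2" t]
    by auto
  then show "0 \<le> inv_rlap (inv_rlap g) r \<and> inv_rlap (inv_rlap g) r \<le> r^2 / 12" .
  have c2: "continuous_on UNIV (inv_rlap (inv_rlap g))" by (rule continuous_on_inv_rlap[OF c1])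
  have "continuous_on UNIV (\<lambda>t::real. (1/12) * t^2)" by (intro continuous_intros)
  then show "0 \<le> inv_rlap (inv_rlap (inv_rlap g)) r \<and> inv_rlap (inv_rlap (inv_rlap g)) r \<le> r^4 / 240"
    using inv_rlap_nonneg[OF c2] b2 inv_rlap_mono[OF c2, of "\<lambda>t. (1/12) * t^2" r]
      inv_rlap_square[of "1/12" r]
    by auto
qed

lemma inv_rlap_iterate_mono:
  assumes g1: "continuous_on UNIV g1" and g2: "continuous_on UNIV g2" and le: "\<And>t. g1 t \<le> g2 t"
  shows "inv_rlap (inv_rlap (inv_rlap g1)) r \<le> inv_rlap (inv_rlap (inv_rlap g2)) r"
  by (intro inv_rlap_mono continuous_on_inv_rlap g1 g2 le allI)

lemma dil_avg_square_bound:
  assumes h: "continuous_on UNIV h" and bound: "\<And>t. 0 \<le> h t \<and> h t \<le> t^2 / 12"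
    and rR: "\<bar>r\<bar> \<le> R"
  shows "0 \<le> dil_avg (\<lambda>s. s^2) h r \<and> dil_avg (\<lambda>s. s^2) h r \<le> R^2 / 12"
proof
  have int: "(\<lambda>s. s^2 * h (r * s)) integrable_on {0..1}"
    by (intro integrable_dilate h continuous_intros)
  show "0 \<le> dil_avg (\<lambda>s. s^2) h r"
    unfolding dil_avg_def using bound by (intro integral_nonneg int) auto
  have "dil_avg (\<lambda>s. s^2) h r \<le> integral {0..1} (\<lambda>s::real. R^2 / 12)"
    unfolding dil_avg_def
  proof (rule integral_le[OF int])
    fix s :: real assume s: "s \<in> {0..1}"
    have "\<bar>r * s\<bar> \<le> \<bar>R\<bar>"
      using s rR by (auto simp: abs_mult intro: order_trans[OF mult_right_le_one_le])
    then have "(r * s)^2 \<le> R^2" by (simp add: abs_le_square_iff)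
    then have "h (r * s) \<le> R^2 / 12" using bound[of "r * s"] by linarith
    moreover have "s^2 \<le> 1" using s by (simp add: power_le_one)
    ultimately show "s^2 * h (r * s) \<le> R^2 / 12"
      using bound[of "r * s"] mult_mono[of "s^2" 1 "h (r * s)" "R^2 / 12"] by simp
  qed auto
  then show "dil_avg (\<lambda>s. s^2) h r \<le> R^2 / 12" by simp
qed

section \<open>The fixed-point formulation\<close>

definition inv_cube :: "(real \<Rightarrow> real) \<Rightarrow> real \<Rightarrow> real" where
  "inv_cube f r = inverse (f r ^ 3)"

text \<open>Problem (P) is the fixed-point equation \<open>u = solution_map k \<epsilon> u\<close>: the quartic has
  \<open>\<Delta>\<^sup>3 = 0\<close> and the initial data of (P), and the three inverse Laplacians add \<open>\<Delta>\<^sup>-\<^sup>3(-u\<^sup>-\<^sup>3)\<close>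
  without changing the data at the origin.\<close>

definition solution_map :: "real \<Rightarrow> real \<Rightarrow> (real \<Rightarrow> real) \<Rightarrow> real \<Rightarrow> real" where
  "solution_map k e f r =
     even_quartic k (- e / 6) (1/120) r - inv_rlap (inv_rlap (inv_rlap (inv_cube f))) r"

lemma even_fun_inv_cube: "even_fun f \<Longrightarrow> even_fun (inv_cube f)"
  unfolding even_fun_def inv_cube_def by simp

lemma cont_diff_inv_cube:
  assumes "cont_diff n f" "\<And>r. 0 < f r"
  shows "cont_diff n (inv_cube f)"
  unfolding inv_cube_def[abs_def]
  by (intro cont_diff_inverse cont_diff_power assms(1)) (use assms(2) in \<open>metis less_irrefl power_not_zero\<close>)

lemma inv_cube_decay:
  assumes "1 + r^2 \<le> f r"
  shows "0 \<le> inv_cube f r \<and> inv_cube f r \<le> inverse ((1 + r^2)^2)"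
proof -
  have f1: "1 \<le> f r" using assms zero_le_power2[of r] by linarith
  have "(1 + r^2)^2 \<le> f r ^ 2" using assms by (intro power_mono) (auto simp: add_nonneg_nonneg)
  also have "\<dots> \<le> f r ^ 3" using f1 by (intro power_increasing) auto
  finally have "inverse (f r ^ 3) \<le> inverse ((1 + r^2)^2)"
    by (rule le_imp_inverse_le) (simp add: add_nonneg_eq_0_iff)
  then show ?thesis unfolding inv_cube_def using f1 by simp
qed

lemma fixed_point_cont_diff:
  assumes cont: "continuous_on UNIV u" and even: "even_fun u" and pos: "\<And>r. 0 < u r"
    and fixed: "solution_map k e u = u"
  shows "cont_diff n u"
proof (induction n)
  case 0
  then show ?case using cont by simp
next
  case (Suc n)
  have "cont_diff (Suc (Suc (Suc n))) (inv_rlap (inv_rlap (inv_rlap (inv_cube u))))"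
    by (intro cont_diff_inv_rlap even_fun_inv_rlap even_fun_inv_cube even
        cont_diff_inv_cube[OF Suc.IH pos])
  then have "cont_diff (Suc (Suc (Suc n))) (solution_map k e u)"
    unfolding solution_map_def[abs_def] by (intro cont_diff_diff cont_diff_even_quartic)
  then show ?case
    using fixed cont_diff_mono[of "Suc n" "Suc (Suc (Suc n))"] by simp
qed

lemma rlap_solution_map:
  assumes even: "even_fun (inv_cube f)" and smooth: "\<And>n. cont_diff n (inv_cube f)"
  shows "rlap (solution_map k e f)
           = (\<lambda>r. even_quartic (- e) (1/6) 0 r - inv_rlap (inv_rlap (inv_cube f)) r)"
    and "rlap (rlap (solution_map k e f)) = (\<lambda>r. even_quartic 1 0 0 r - inv_rlap (inv_cube f) r)"
    and "rlap (rlap (rlap (solution_map k e f))) = (\<lambda>r. - inv_cube f r)"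
proof -
  note even1 = even_fun_inv_rlap[OF even]
  have smooth1: "cont_diff n (inv_rlap (inv_cube f))" for n
    using cont_diff_SucD[OF cont_diff_inv_rlap[OF even smooth]] .
  have smooth2: "cont_diff n (inv_rlap (inv_rlap (inv_cube f)))" for n
    using cont_diff_SucD[OF cont_diff_inv_rlap[OF even1 smooth1]] .
  show w: "rlap (solution_map k e f)
      = (\<lambda>r. even_quartic (- e) (1/6) 0 r - inv_rlap (inv_rlap (inv_cube f)) r)"
    unfolding solution_map_def[abs_def]
    by (simp add: rlap_even_quartic_minus_inv_rlap[OF even_fun_inv_rlap[OF even1] smooth2])
  show v: "rlap (rlap (solution_map k e f)) = (\<lambda>r. even_quartic 1 0 0 r - inv_rlap (inv_cube f) r)"
    unfolding w by (simp add: rlap_even_quartic_minus_inv_rlap[OF even1 smooth1])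
  show "rlap (rlap (rlap (solution_map k e f))) = (\<lambda>r. - inv_cube f r)"
    unfolding v rlap_even_quartic_minus_inv_rlap[OF even smooth] by (simp add: even_quartic_def)
qed

lemma fixed_point_imp_pos_entire_radial_sol:
  assumes cont: "continuous_on UNIV u" and even: "even_fun u" and pos: "\<And>r. 0 < u r"
    and fixed: "solution_map k e u = u"
  shows "pos_entire_radial_sol k e u"
proof -
  note smooth = fixed_point_cont_diff[OF cont even pos fixed]
  note even_g = even_fun_inv_cube[OF even] and smooth_g = cont_diff_inv_cube[OF smooth pos]
  note w = rlap_solution_map(1)[where k=k and e=e, OF even_g smooth_g, unfolded fixed]
  note v = rlap_solution_map(2)[where k=k and e=e, OF even_g smooth_g, unfolded fixed]
  note z = rlap_solution_map(3)[where k=k and e=e, OF even_g smooth_g, unfolded fixed]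
  have du: "deriv u 0 = 0"
    using smooth[of 1] even by (auto intro: even_fun_imp_deriv_0)
  have "even_fun (rlap u)"
    unfolding w using even_fun_inv_rlap[OF even_fun_inv_rlap[OF even_g]] even_fun_even_quartic
    by (simp add: even_fun_def)
  then have dw: "deriv (rlap u) 0 = 0"
    using cont_diff_rlap[OF smooth du, of 1] by (auto intro: even_fun_imp_deriv_0)
  have "even_fun (rlap (rlap u))"
    unfolding v using even_fun_inv_rlap[OF even_g] even_fun_even_quartic by (simp add: even_fun_def)
  then have dv: "deriv (rlap (rlap u)) 0 = 0"
    using cont_diff_rlap[OF cont_diff_rlap[OF smooth du] dw, of 1]
    by (auto intro: even_fun_imp_deriv_0)
  have "u 0 = k"
    using fun_cong[OF fixed, of 0] by (simp add: solution_map_def even_quartic_def)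
  moreover have "rlap u 0 = - e"
    unfolding w by (simp add: even_quartic_def)
  moreover have "rlap (rlap u) 0 = 1"
    unfolding v by (simp add: even_quartic_def)
  moreover have "rlap (rlap (rlap u)) r = - 1 / u r ^ 3" for r
    unfolding z inv_cube_def by (simp add: divide_inverse)
  ultimately show ?thesis
    unfolding pos_entire_radial_sol_def smooth_fun_iff_cont_diff
    using smooth even pos du dw dv by auto
qed

section \<open>Construction of a fixed point by monotone iteration\<close>

context
  fixes k e :: real
  assumes k: "100 \<le> k" and e: "0 < e" "e < 1"
begin

text \<open>This is where \<open>k \<ge> 100\<close> enters: with \<open>\<epsilon> < 1\<close> the inequality reduces to
  \<open>(r\<^sup>2 - 140)\<^sup>2 + 240 (k - 1) - 140\<^sup>2 \<ge> 0\<close>.\<close>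

lemma even_quartic_lower_ge: "1 + r^2 \<le> even_quartic k (- e / 6) (1/240) r"
proof -
  have r4: "r^4 = r^2 * r^2" by (simp add: power_add[symmetric])
  have sq: "0 \<le> (r^2 - 140) * (r^2 - 140)" by simp
  have "e * r^2 \<le> r^2" by (intro mult_left_le_one_le) (use e in auto)
  then show ?thesis unfolding even_quartic_def r4 using sq k by (simp add: algebra_simps)
qed

definition admissible :: "(real \<Rightarrow> real) \<Rightarrow> bool" where
  "admissible f \<longleftrightarrow> continuous_on UNIV f \<and> even_fun f \<and>
     (\<forall>r. even_quartic k (- e / 6) (1/240) r \<le> f r \<and> f r \<le> even_quartic k (- e / 6) (1/120) r)"

lemma admissible_ge: "admissible f \<Longrightarrow> 1 + r^2 \<le> f r"
  unfolding admissible_def using even_quartic_lower_ge order_trans by blast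

lemma admissible_pos: "admissible f \<Longrightarrow> 0 < f r"
  using admissible_ge[of f r] zero_le_power2[of r] by linarith

lemma admissible_inv_cube:
  assumes "admissible f"
  shows "continuous_on UNIV (inv_cube f)" "even_fun (inv_cube f)"
    and "\<And>t. 0 \<le> inv_cube f t \<and> inv_cube f t \<le> inverse ((1 + t^2)^2)"
  using assms cont_diff_inv_cube[of 0 f] even_fun_inv_cube inv_cube_decay admissible_ge admissible_pos
  unfolding admissible_def by auto

lemma admissible_even_quartic_lower: "admissible (even_quartic k (- e / 6) (1/240))"
  using cont_diff_imp_continuous_on[OF cont_diff_even_quartic[of 0 k "- e / 6" "1/240"]]
    even_fun_even_quartic[of k "- e / 6" "1/240"]
  unfolding admissible_def by (auto simp: even_quartic_def)

lemma admissible_solution_map: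
  assumes f: "admissible f"
  shows "admissible (solution_map k e f)"
proof -
  note g = admissible_inv_cube[OF f]
  have "continuous_on UNIV (solution_map k e f)"
    unfolding solution_map_def[abs_def]
    by (intro continuous_on_diff cont_diff_imp_continuous_on[OF cont_diff_even_quartic]
        continuous_on_inv_rlap g(1))
  moreover have "even_fun (solution_map k e f)"
    using even_fun_even_quartic even_fun_inv_rlap[OF even_fun_inv_rlap[OF even_fun_inv_rlap[OF g(2)]]]
    unfolding solution_map_def[abs_def] even_fun_def by simp
  moreover have "even_quartic k (- e / 6) (1/240) r \<le> solution_map k e f r \<and>
      solution_map k e f r \<le> even_quartic k (- e / 6) (1/120) r" for r
    using inv_rlap_iterates_bounds(3)[OF g(1) g(3), of r]
    unfolding solution_map_def even_quartic_def by simp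
  ultimately show ?thesis unfolding admissible_def by blast
qed

lemma solution_map_mono:
  assumes f1: "admissible f1" and f2: "admissible f2" and le: "\<And>r. f1 r \<le> f2 r"
  shows "solution_map k e f1 r \<le> solution_map k e f2 r"
proof -
  have "inv_cube f2 t \<le> inv_cube f1 t" for t
    unfolding inv_cube_def using admissible_pos[OF f1, of t] le[of t]
    by (intro le_imp_inverse_le power_mono) auto
  then show ?thesis
    using inv_rlap_iterate_mono admissible_inv_cube(1)[OF f1] admissible_inv_cube(1)[OF f2]
    unfolding solution_map_def by (simp add: inv_rlap_iterate_mono)
qed

definition picard :: "nat \<Rightarrow> real \<Rightarrow> real" where
  "picard n = (solution_map k e ^^ n) (even_quartic k (- e / 6) (1/240))"

lemma picard_Suc: "picard (Suc n) = solution_map k e (picard n)"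
  unfolding picard_def by simp

lemma admissible_picard: "admissible (picard n)"
  using admissible_even_quartic_lower admissible_solution_map
  by (induction n) (simp_all add: picard_def)

lemma picard_le_Suc: "picard n r \<le> picard (Suc n) r"
proof (induction n arbitrary: r)
  case 0
  show ?case
    using admissible_picard[of 1] unfolding admissible_def by (simp add: picard_def)
next
  case (Suc n)
  show ?case
    unfolding picard_Suc[of "Suc n"] picard_Suc[of n]
    by (rule solution_map_mono[OF admissible_picard admissible_solution_map[OF admissible_picard]])
       (use Suc picard_Suc in simp)
qed

definition picard_lim :: "real \<Rightarrow> real" where
  "picard_lim r = (SUP n. picard n r)"

lemma picard_tendsto: "(\<lambda>n. picard n r) \<longlonglongrightarrow> picard_lim r"
  unfolding picard_lim_def
proof (rule LIMSEQ_incseq_SUP)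
  show "bdd_above (range (\<lambda>n. picard n r))"
    using admissible_picard unfolding admissible_def
    by (intro bdd_aboveI[of _ "even_quartic k (- e / 6) (1/120) r"]) blast
  show "incseq (\<lambda>n. picard n r)"
    using picard_le_Suc by (intro incseq_SucI)
qed

lemma picard_lim_bounds:
  "even_quartic k (- e / 6) (1/240) r \<le> picard_lim r \<and> picard_lim r \<le> even_quartic k (- e / 6) (1/120) r"
proof
  show "even_quartic k (- e / 6) (1/240) r \<le> picard_lim r"
    by (rule LIMSEQ_le_const[OF picard_tendsto]) (use admissible_picard in \<open>auto simp: admissible_def\<close>)
  show "picard_lim r \<le> even_quartic k (- e / 6) (1/120) r"
    by (rule LIMSEQ_le_const2[OF picard_tendsto]) (use admissible_picard in \<open>auto simp: admissible_def\<close>)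
qed

lemma even_fun_picard_lim: "even_fun picard_lim"
  using admissible_picard unfolding picard_lim_def admissible_def even_fun_def by simp

lemma picard_lim_pos: "0 < picard_lim r"
  using picard_lim_bounds[of r] even_quartic_lower_ge[of r] zero_le_power2[of r] by linarith

lemma solution_map_picard_lim: "solution_map k e picard_lim r = picard_lim r"
proof -
  let ?g = "\<lambda>n. inv_cube (picard n)"
  have decay_le_1: "inverse ((1 + t^2)^2) \<le> (1::real)" for t
    using one_le_power[of "1 + t^2" 2] by (simp add: inverse_le_1_iff)
  have lim0: "(\<lambda>n. ?g n t) \<longlonglongrightarrow> inv_cube picard_lim t" for t
    unfolding inv_cube_def using picard_lim_pos[of t] by (intro tendsto_intros picard_tendsto) auto
  have cont0: "continuous_on UNIV (?g n)" and bounds0: "0 \<le> ?g n t \<and> ?g n t \<le> inverse ((1 + t^2)^2)"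
    for n t
    using admissible_inv_cube[OF admissible_picard] by auto
  have cont1: "continuous_on UNIV (inv_rlap (?g n))" for n
    using continuous_on_inv_rlap[OF cont0] .
  have cont2: "continuous_on UNIV (inv_rlap (inv_rlap (?g n)))" for n
    using continuous_on_inv_rlap[OF cont1] .
  have "\<bar>?g n t\<bar> \<le> 1 + t^2" for n t
    using bounds0[of n t] decay_le_1[of t] zero_le_power2[of t] by linarith
  from tendsto_inv_rlap[OF cont0 this lim0]
  have lim1: "(\<lambda>n. inv_rlap (?g n) t) \<longlonglongrightarrow> inv_rlap (inv_cube picard_lim) t" for t .
  have "\<bar>inv_rlap (?g n) t\<bar> \<le> 1 + t^2" for n t
    using inv_rlap_iterates_bounds(1)[OF cont0 bounds0, of n t] zero_le_power2[of t] by linarith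
  from tendsto_inv_rlap[OF cont1 this lim1]
  have lim2: "(\<lambda>n. inv_rlap (inv_rlap (?g n)) t) \<longlonglongrightarrow> inv_rlap (inv_rlap (inv_cube picard_lim)) t"
    for t .
  have "\<bar>inv_rlap (inv_rlap (?g n)) t\<bar> \<le> 1 + t^2" for n t
    using inv_rlap_iterates_bounds(2)[OF cont0 bounds0, of n t] zero_le_power2[of t] by linarith
  from tendsto_inv_rlap[OF cont2 this lim2]
  have "(\<lambda>n. solution_map k e (picard n) r) \<longlonglongrightarrow> solution_map k e picard_lim r"
    unfolding solution_map_def by (intro tendsto_diff tendsto_const)
  moreover have "(\<lambda>n. solution_map k e (picard n) r) \<longlonglongrightarrow> picard_lim r"
    using LIMSEQ_Suc[OF picard_tendsto[of r]] unfolding picard_Suc .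
  ultimately show ?thesis by (rule LIMSEQ_unique)
qed

lemma DERIV_solution_map:
  assumes f: "admissible f"
  shows "DERIV (solution_map k e f) r :>
    2 * (- e / 6) * r + 4 * (1/120) * r^3 - r * dil_avg (\<lambda>s. s^2) (inv_rlap (inv_rlap (inv_cube f))) r"
proof -
  note g = admissible_inv_cube[OF f]
  have "DERIV (inv_rlap (inv_rlap (inv_rlap (inv_cube f)))) r
      :> r * dil_avg (\<lambda>s. s^2) (inv_rlap (inv_rlap (inv_cube f))) r"
    using g by (intro DERIV_inv_rlap continuous_on_inv_rlap even_fun_inv_rlap)
  then show ?thesis
    unfolding solution_map_def[abs_def] by (intro DERIV_diff DERIV_even_quartic)
qed

lemma deriv_solution_map_bound:
  assumes f: "admissible f" and zR: "\<bar>z\<bar> \<le> R"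
  shows "\<bar>2 * (- e / 6) * z + 4 * (1/120) * z^3
           - z * dil_avg (\<lambda>s. s^2) (inv_rlap (inv_rlap (inv_cube f))) z\<bar> \<le> R + R^3"
proof -
  note g = admissible_inv_cube[OF f]
  let ?K = "dil_avg (\<lambda>s. s^2) (inv_rlap (inv_rlap (inv_cube f))) z"
  have R: "0 \<le> R" using zR by linarith
  have K: "0 \<le> ?K \<and> ?K \<le> R^2 / 12"
    using inv_rlap_iterates_bounds(2)[OF g(1) g(3)]
    by (intro dil_avg_square_bound continuous_on_inv_rlap g(1) zR) auto
  have "\<bar>2 * (- e / 6) * z\<bar> \<le> R / 3"
    using e zR by (simp add: abs_mult) (smt (verit) mult_left_le_one_le abs_ge_zero)
  moreover have "\<bar>4 * (1/120) * z^3\<bar> \<le> R^3 / 30"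
    using power_mono[OF zR, of 3] by (simp add: abs_mult power_abs)
  moreover have "\<bar>z\<bar> * ?K \<le> R * (R^2 / 12)"
    using K zR by (intro mult_mono) auto
  then have "\<bar>z * ?K\<bar> \<le> R * (R^2 / 12)"
    using K by (simp add: abs_mult)
  moreover have "R * (R^2 / 12) = R^3 / 12" "0 \<le> R^3"
    using R by (simp_all add: power3_eq_cube power2_eq_square)
  ultimately show ?thesis using R by linarith
qed

lemma solution_map_lipschitz:
  assumes f: "admissible f" and x: "x \<in> {-R..R}" and y: "y \<in> {-R..R}"
  shows "\<bar>solution_map k e f x - solution_map k e f y\<bar> \<le> (R + R^3) * \<bar>x - y\<bar>"
  using field_differentiable_bound[where S="{-R..R}", OF _ _ _ x y, of "solution_map k e f"]
    has_field_derivative_at_within[OF DERIV_solution_map[OF f]] deriv_solution_map_bound[OF f]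
  by (fastforce simp: abs_le_iff)

lemma picard_lim_lipschitz:
  assumes x: "x \<in> {-R..R}" and y: "y \<in> {-R..R}"
  shows "\<bar>picard_lim x - picard_lim y\<bar> \<le> (R + R^3) * \<bar>x - y\<bar>"
proof (rule LIMSEQ_le_const2)
  show "(\<lambda>n. \<bar>picard (Suc n) x - picard (Suc n) y\<bar>) \<longlonglongrightarrow> \<bar>picard_lim x - picard_lim y\<bar>"
    by (intro tendsto_intros LIMSEQ_Suc picard_tendsto)
  show "\<exists>N. \<forall>n\<ge>N. \<bar>picard (Suc n) x - picard (Suc n) y\<bar> \<le> (R + R^3) * \<bar>x - y\<bar>"
    unfolding picard_Suc using solution_map_lipschitz[OF admissible_picard x y] by blast
qed

lemma continuous_on_picard_lim: "continuous_on UNIV picard_lim"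
  unfolding continuous_on_eq_continuous_at[OF open_UNIV]
proof
  fix x :: real
  define R where "R = \<bar>x\<bar> + 1"
  have "(R + R^3)-lipschitz_on {-R..R} picard_lim"
    by (rule lipschitz_onI) (use picard_lim_lipschitz R_def in \<open>auto simp: dist_real_def\<close>)
  then have "continuous_on {-R..R} picard_lim" by (rule lipschitz_on_continuous_on)
  moreover have "x \<in> interior {-R..R}" unfolding R_def by auto
  ultimately show "isCont picard_lim x" by (rule continuous_on_interior)
qed

lemma pos_entire_radial_sol_exists: "\<exists>u. pos_entire_radial_sol k e u"
  using fixed_point_imp_pos_entire_radial_sol[OF continuous_on_picard_lim even_fun_picard_lim
      picard_lim_pos] solution_map_picard_lim
  by blast

end

section \<open>A priori bounds for solutions\<close>

text \<open>Maximum principle for the radial Laplacian: \<open>(r\<^sup>2 f')' = r\<^sup>2 \<Delta>f\<close>.\<close>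

lemma rlap_nonpos_imp_deriv_nonpos:
  assumes f: "cont_diff 2 f" and f0: "deriv f 0 = 0" and neg: "\<And>r. 0 < r \<Longrightarrow> rlap f r \<le> 0"
    and r: "0 \<le> r"
  shows "deriv f r \<le> 0"
proof -
  note D = cont_diff_2_imp_DERIV[OF f]
  have "r^2 * deriv f r \<le> 0^2 * deriv f 0"
  proof (rule DERIV_nonpos_imp_nonincreasing[OF r])
    fix x assume x: "0 \<le> x" "x \<le> r"
    have "DERIV (\<lambda>x. x^2 * deriv f x) x :> 2 * x * deriv f x + x^2 * deriv (deriv f) x"
      by (auto intro!: derivative_eq_intros D)
    moreover have "2 * x * deriv f x + x^2 * deriv (deriv f) x = x^2 * rlap f x"
      using x f0 by (cases "x = 0") (simp_all add: rlap_def field_simps power2_eq_square)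
    moreover have "x^2 * rlap f x \<le> 0"
      using neg[of x] x by (cases "x = 0") (auto simp: mult_nonneg_nonpos)
    ultimately show "\<exists>y. DERIV (\<lambda>x. x^2 * deriv f x) x :> y \<and> y \<le> 0" by auto
  qed
  then show ?thesis
    using r f0 by (cases "r = 0") (auto simp: mult_le_0_iff)
qed

lemma rlap_nonpos_imp_antimono:
  assumes f: "cont_diff 2 f" and f0: "deriv f 0 = 0" and neg: "\<And>r. 0 < r \<Longrightarrow> rlap f r \<le> 0"
    and "0 \<le> a" "a \<le> b"
  shows "f b \<le> f a"
proof (rule DERIV_nonpos_imp_nonincreasing[OF assms(5)])
  fix x assume "a \<le> x" "x \<le> b"
  then have "deriv f x \<le> 0"
    using assms(4) by (intro rlap_nonpos_imp_deriv_nonpos[OF f f0 neg]) auto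
  then show "\<exists>y. DERIV f x :> y \<and> y \<le> 0"
    using cont_diff_2_imp_DERIV(1)[OF f] by blast
qed

lemma rlap_le_imp_diff_antimono:
  assumes f: "cont_diff 2 f" and g: "cont_diff 2 g" and d0: "deriv f 0 = deriv g 0"
    and le: "\<And>r. 0 < r \<Longrightarrow> rlap f r \<le> rlap g r" and "0 \<le> x" "x \<le> y"
  shows "f y - g y \<le> f x - g x"
proof (rule rlap_nonpos_imp_antimono[where f="\<lambda>r. f r - g r"])
  show "cont_diff 2 (\<lambda>r. f r - g r)" by (intro cont_diff_diff f g)
  have "DERIV (\<lambda>r. f r - g r) 0 :> deriv f 0 - deriv g 0"
    by (intro DERIV_diff cont_diff_2_imp_DERIV(1) f g)
  then show "deriv (\<lambda>r. f r - g r) 0 = 0"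
    using d0 DERIV_imp_deriv by fastforce
  show "rlap (\<lambda>r. f r - g r) r \<le> 0" if "0 < r" for r
    using le[OF that] by (simp add: rlap_diff[OF f g])
qed (use assms in auto)

lemma rlap_le_even_quartic_imp_le:
  assumes f: "cont_diff 2 f" and f0: "deriv f 0 = 0"
    and le: "\<And>s. 0 < s \<Longrightarrow> rlap f s \<le> even_quartic (6 * b) (20 * c) 0 s" and r: "0 \<le> r"
  shows "f r \<le> even_quartic (f 0) b c r"
proof -
  have "f r - even_quartic (f 0) b c r \<le> f 0 - even_quartic (f 0) b c 0"
    using le by (intro rlap_le_imp_diff_antimono[OF f cont_diff_even_quartic _ _ order_refl r])
      (simp_all add: f0 deriv_even_quartic_0 rlap_even_quartic)
  then show ?thesis by (simp add: even_quartic_def)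
qed

lemma rlap_ge_even_quartic_imp_ge:
  assumes f: "cont_diff 2 f" and f0: "deriv f 0 = 0"
    and ge: "\<And>s. 0 < s \<Longrightarrow> even_quartic (6 * b) (20 * c) 0 s \<le> rlap f s" and r: "0 \<le> r"
  shows "even_quartic (f 0) b c r \<le> f r"
proof -
  have "even_quartic (f 0) b c r - f r \<le> even_quartic (f 0) b c 0 - f 0"
    using ge by (intro rlap_le_imp_diff_antimono[OF cont_diff_even_quartic f _ _ order_refl r])
      (simp_all add: f0 deriv_even_quartic_0 rlap_even_quartic)
  then show ?thesis by (simp add: even_quartic_def)
qed

text \<open>Integrating the inequality \<open>\<Delta>f \<le> -c\<close> twice as in \<open>rlap_nonpos_imp_deriv_nonpos\<close>, with \<open>f + c r\<^sup>2/6\<close>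
  in place of f.\<close>

lemma rlap_le_neg_imp_quadratic_bound:
  assumes f: "cont_diff 2 f" and a: "0 < a" and le: "\<And>r. a \<le> r \<Longrightarrow> rlap f r \<le> - c"
  shows "\<exists>M. \<forall>r\<ge>a. f r \<le> M - c * r^2 / 6"
proof -
  note D = cont_diff_2_imp_DERIV[OF f]
  let ?d = "\<lambda>x. f x + c * x^2 / 6"
  let ?d' = "\<lambda>x. deriv f x + c * x / 3"
  define A where "A = a^2 * ?d' a"
  have A: "x^2 * ?d' x \<le> A" if "a \<le> x" for x
    unfolding A_def
  proof (rule DERIV_nonpos_imp_nonincreasing[OF that])
    fix y assume y: "a \<le> y" "y \<le> x"
    have "DERIV (\<lambda>x. x^2 * ?d' x) y :> 2 * y * ?d' y + y^2 * (deriv (deriv f) y + c / 3)"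
      by (auto intro!: derivative_eq_intros D)
    moreover have "2 * y * ?d' y + y^2 * (deriv (deriv f) y + c / 3) = y^2 * (rlap f y + c)"
      using y a by (simp add: rlap_def field_simps power2_eq_square)
    moreover have "y^2 * (rlap f y + c) \<le> 0"
      using le[of y] y by (intro mult_nonneg_nonpos) auto
    ultimately show "\<exists>z. DERIV (\<lambda>x. x^2 * ?d' x) y :> z \<and> z \<le> 0" by auto
  qed
  have B: "?d x + A / x \<le> ?d a + A / a" if "a \<le> x" for x
  proof (rule DERIV_nonpos_imp_nonincreasing[OF that])
    fix y assume y: "a \<le> y" "y \<le> x"
    have "DERIV (\<lambda>x. ?d x + A / x) y :> ?d' y - A / y^2"
      using y a by (auto intro!: derivative_eq_intros D simp: power2_eq_square field_simps)
    moreover have "?d' y \<le> A / y^2"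
      using A[of y] y a by (simp add: field_simps)
    ultimately show "\<exists>z. DERIV (\<lambda>x. ?d x + A / x) y :> z \<and> z \<le> 0" by auto
  qed
  have "- (A / x) \<le> \<bar>A\<bar> / a" if "a \<le> x" for x
  proof -
    have "\<bar>A / x\<bar> \<le> \<bar>A\<bar> / a"
      using that a by (simp add: divide_left_mono)
    then show ?thesis by linarith
  qed
  with B show ?thesis
    by (intro exI[of _ "?d a + A / a + \<bar>A\<bar> / a"]) force
qed

lemma rlap_le_neg_imp_tendsto_at_bot:
  assumes f: "cont_diff 2 f" and a: "0 < a" and c: "0 < c"
    and le: "\<And>r. a \<le> r \<Longrightarrow> rlap f r \<le> - c"
  shows "filterlim f at_bot at_top"
proof -
  obtain M where M: "\<And>r. a \<le> r \<Longrightarrow> f r \<le> M - c * r^2 / 6"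
    using rlap_le_neg_imp_quadratic_bound[OF f a le] by blast
  have "filterlim (\<lambda>r. - M + c / 6 * r^2) at_top at_top"
    using c by (intro filterlim_tendsto_add_at_top[OF tendsto_const]
        filterlim_tendsto_pos_mult_at_top[OF tendsto_const] filterlim_pow_at_top filterlim_ident) auto
  moreover have "eventually (\<lambda>r. - M + c / 6 * r^2 \<le> - f r) at_top"
    using eventually_ge_at_top[of a]
  proof eventually_elim
    case (elim r)
    then show ?case using M[of r] by linarith
  qed
  ultimately have "filterlim (\<lambda>r. - f r) at_top at_top"
    by (rule filterlim_at_top_mono)
  then show ?thesis
    by (simp add: filterlim_uminus_at_bot)
qed

context
  fixes k e :: real and u :: "real \<Rightarrow> real"
  assumes sol: "pos_entire_radial_sol k e u"
begin

lemma sol_pos: "0 \<le> r \<Longrightarrow> 0 < u r"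
  using sol unfolding pos_entire_radial_sol_def by auto

lemma sol_initial: "u 0 = k" "rlap u 0 = - e" "rlap (rlap u) 0 = 1"
  "deriv u 0 = 0" "deriv (rlap u) 0 = 0" "deriv (rlap (rlap u)) 0 = 0"
  using sol unfolding pos_entire_radial_sol_def by auto

lemma sol_cont_diff: "cont_diff n u" "cont_diff n (rlap u)" "cont_diff n (rlap (rlap u))"
proof -
  show u: "cont_diff n u" for n
    using sol unfolding pos_entire_radial_sol_def smooth_fun_iff_cont_diff by blast
  show w: "cont_diff n (rlap u)" for n
    using cont_diff_rlap[OF u sol_initial(4)] .
  show "cont_diff n (rlap (rlap u))"
    using cont_diff_rlap[OF w sol_initial(5)] .
qed

lemma sol_bilap_antimono: "0 \<le> a \<Longrightarrow> a \<le> b \<Longrightarrow> rlap (rlap u) b \<le> rlap (rlap u) a"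
proof (rule rlap_nonpos_imp_antimono[OF sol_cont_diff(3) sol_initial(6)])
  fix r :: real assume r: "0 < r"
  have "rlap (rlap (rlap u)) r = - 1 / u r ^ 3"
    using sol r unfolding pos_entire_radial_sol_def by simp
  moreover have "0 < u r ^ 3" using sol_pos r by simp
  ultimately show "rlap (rlap (rlap u)) r \<le> 0" by simp
qed

lemma sol_lap_le: "0 \<le> r \<Longrightarrow> rlap u r \<le> even_quartic (- e) (1/6) 0 r"
  using rlap_le_even_quartic_imp_le[OF sol_cont_diff(2) sol_initial(5), of "1/6" 0 r]
    sol_bilap_antimono[of 0] sol_initial(2,3)
  by (simp add: even_quartic_def)

lemma sol_le_upper: "0 \<le> r \<Longrightarrow> u r \<le> even_quartic k (- e / 6) (1/120) r"
  using rlap_le_even_quartic_imp_le[OF sol_cont_diff(1) sol_initial(4), of "- e / 6" "1/120" r]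
    sol_lap_le sol_initial(1)
  by (simp add: even_quartic_def)

lemma sol_bilap_nonneg:
  assumes r: "0 \<le> r"
  shows "0 \<le> rlap (rlap u) r"
proof (rule ccontr)
  assume "\<not> 0 \<le> rlap (rlap u) r"
  then have neg: "rlap (rlap u) r < 0" by simp
  with r sol_initial(3) have "0 < r" by (cases "r = 0") auto
  have "filterlim (rlap u) at_bot at_top"
    by (rule rlap_le_neg_imp_tendsto_at_bot[OF sol_cont_diff(2) \<open>0 < r\<close>, of "- rlap (rlap u) r"])
       (use neg sol_bilap_antimono r in auto)
  then obtain R where R: "\<And>s. R \<le> s \<Longrightarrow> rlap u s \<le> - 1"
    unfolding filterlim_at_bot eventually_at_top_linorder by blast
  have "filterlim u at_bot at_top"
    by (rule rlap_le_neg_imp_tendsto_at_bot[OF sol_cont_diff(1), of "max R 1" 1]) (use R in auto)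
  then have "eventually (\<lambda>s. u s \<le> 0) at_top"
    by (simp add: filterlim_at_bot)
  moreover have "eventually (\<lambda>s. 0 < u s) at_top"
    using eventually_ge_at_top[of 0] by eventually_elim (rule sol_pos)
  ultimately have "eventually (\<lambda>_. False) (at_top :: real filter)"
    by eventually_elim auto
  then show False by simp
qed

lemma sol_lap_ge: "0 \<le> r \<Longrightarrow> - e \<le> rlap u r"
  using rlap_ge_even_quartic_imp_ge[OF sol_cont_diff(2) sol_initial(5), of 0 0 r]
    sol_bilap_nonneg sol_initial(2)
  by (simp add: even_quartic_def)

lemma sol_ge_lower: "0 \<le> r \<Longrightarrow> even_quartic k (- e / 6) 0 r \<le> u r"
  using rlap_ge_even_quartic_imp_ge[OF sol_cont_diff(1) sol_initial(4), of "- e / 6" 0 r]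
    sol_lap_ge sol_initial(1)
  by (simp add: even_quartic_def)

lemma sol_eps_le: "e \<le> sqrt (6 * k / 5)"
proof (cases "e \<le> 0")
  case True
  have "0 < k" using sol_pos[of 0] sol_initial(1) by simp
  with True show ?thesis by (meson order_trans real_sqrt_ge_zero less_imp_le divide_nonneg_pos
        mult_nonneg_nonneg zero_le_numeral zero_less_numeral)
next
  case False
  define r where "r = sqrt (10 * e)"
  have r: "0 \<le> r" "r^2 = 10 * e" unfolding r_def using False by simp_all
  have "r^4 = r^2 * r^2" by (simp flip: power_add)
  then have "r^4 = 100 * e^2" using r(2) by (simp add: power2_eq_square)
  then have "u r \<le> k - 5/6 * e^2"
    using sol_le_upper[OF r(1)] r(2) by (simp add: even_quartic_def power2_eq_square)
  then have "e^2 \<le> 6 * k / 5" using sol_pos[OF r(1)] by simp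
  then show ?thesis by (rule real_le_rsqrt)
qed

end

theorem lemma2:
  shows "\<exists>k0>0. \<forall>k\<ge>k0.
           (\<forall>\<epsilon>. 0 < \<epsilon> \<and> \<epsilon> < 1 \<longrightarrow> (\<exists>u. pos_entire_radial_sol k \<epsilon> u)) \<and>
           (\<forall>\<epsilon> u. pos_entire_radial_sol k \<epsilon> u \<longrightarrow>
              \<epsilon> \<le> sqrt (6 * k / 5) \<and>
              (\<forall>r>0. k - \<epsilon> / 6 * r^2 \<le> u r \<and> u r \<le> k - \<epsilon> / 6 * r^2 + r^4 / 120))"
proof (intro exI[of _ 100] conjI allI impI)
  fix k \<epsilon> :: real
  assume "100 \<le> k" "0 < \<epsilon> \<and> \<epsilon> < 1"
  then show "\<exists>u. pos_entire_radial_sol k \<epsilon> u"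
    by (intro pos_entire_radial_sol_exists) auto
next
  fix k \<epsilon> r :: real and u
  assume sol: "pos_entire_radial_sol k \<epsilon> u" and "0 < r"
  then show "k - \<epsilon> / 6 * r^2 \<le> u r" "u r \<le> k - \<epsilon> / 6 * r^2 + r^4 / 120"
    using sol_ge_lower[OF sol, of r] sol_le_upper[OF sol, of r] by (simp_all add: even_quartic_def)
next
  fix k \<epsilon> u
  assume "pos_entire_radial_sol k \<epsilon> u"
  then show "\<epsilon> \<le> sqrt (6 * k / 5)" by (rule sol_eps_le)
qed simp

end
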